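(* In $\mathrm{HMF}(\mathbb{C}^2,\Gamma_W,W)$, each $K_{x,i}$ ($1\le i\le p-1$) is orthogonal to each $K_{y,j}$ ($1\le j\le q-1$): $\mathrm{Hom}^\bullet(K_{x,i},K_{y,j})=\mathrm{Hom}^\bullet(K_{y,j},K_{x,i})=0$.
   Context: Let $p,q\ge2$ be integers and $W=x^py+xy^q$. Let $L$ be the abelian group generated by $\vec x,\vec y,\vec c$ modulo $p\vec x+\vec y=\vec x+q\vec y=\vec c$; $S=\mathbb{C}[x,y]$ is $L$-graded with $\deg x=\vec x$, $\deg y=\vec y$, and $R=S/(W)$; $M(l)_k=M_{k+l}$. $\mathrm{HMF}(\mathbb{C}^2,\Gamma_W,W)$ is the homotopy category of $L$-graded matrix factorisations of $W$, equivalent to $D^b(\mathrm{gr}R)/\mathrm{Perf}(\mathrm{gr}R)$, in which a finitely generated $L$-graded $R$-module is identified with its stabilisation; $\mathrm{Hom}^n(X,Y)=\mathrm{Hom}(X,Y[n])$. $K_x=R/(x)$, $K_y=R/(y)$, $K_{x,i}=K_x((i+1-p)\vec x)$, $K_{y,j}=K_y((j+1-q)\vec y)$. *)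

theory Defs
  imports Complex_Main "HOL-Library.Poly_Mapping" "HOL-Library.Product_Plus"
begin

text \<open>Polynomials in x,y: finitely supported maps from exponent pairs (a,b)
  (standing for x^a y^b) to complex coefficients; multiplication is convolution.\<close>
type_synonym poly2 = "(nat \<times> nat) \<Rightarrow>\<^sub>0 complex"

definition varX :: poly2 where "varX = Poly_Mapping.single (1,0) 1"
definition varY :: poly2 where "varY = Poly_Mapping.single (0,1) 1"

definition W :: "nat \<Rightarrow> nat \<Rightarrow> poly2" where
  "W p q = varX ^ p * varY + varX * varY ^ q"

text \<open>Elements of the free abelian group on x,y,c: triples of coefficients
  (coefficient of x-vec, of y-vec, of c-vec).  L is this group modulo the
  subgroup generated by p x + y - c and x + q y - c.\<close>
type_synonym Lrep = "int \<times> int \<times> int"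

definition vx :: Lrep where "vx = (1, 0, 0)"
definition vy :: Lrep where "vy = (0, 1, 0)"
definition vc :: Lrep where "vc = (0, 0, 1)"

definition Leq :: "nat \<Rightarrow> nat \<Rightarrow> Lrep \<Rightarrow> Lrep \<Rightarrow> bool" where
  "Leq p q u v \<longleftrightarrow> (\<exists>m n :: int.
      u - v = (m * int p + n, m + n * int q, - m - n))"

definition homog :: "nat \<Rightarrow> nat \<Rightarrow> Lrep \<Rightarrow> poly2 \<Rightarrow> bool" where
  "homog p q d f \<longleftrightarrow> (\<forall>(a,b) \<in> Poly_Mapping.keys f. Leq p q (int a, int b, 0) d)"

text \<open>A rank-one graded matrix factorisation
   X^0 --u0--> X^1 --u1--> X^0(c)
  with X^0 = S(e0), X^1 = S(e1) is recorded as the tuple (e0, e1, u0, u1).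
  A degree-0 map S(a) \<rightarrow> S(b) is multiplication by a homogeneous polynomial
  of degree b - a.\<close>
type_synonym mf1 = "Lrep \<times> Lrep \<times> poly2 \<times> poly2"

definition is_mf1 :: "nat \<Rightarrow> nat \<Rightarrow> mf1 \<Rightarrow> bool" where
  "is_mf1 p q X = (case X of (e0, e1, u0, u1) \<Rightarrow>
     homog p q (e1 - e0) u0 \<and> homog p q (e0 + vc - e1) u1 \<and> u1 * u0 = W p q)"

text \<open>Shift functor: X[1]^0 = X^1, X[1]^1 = X^0(c), differentials -u1, -u0;
  so that [2] = (c).\<close>
definition shift1 :: "mf1 \<Rightarrow> mf1" where
  "shift1 X = (case X of (e0, e1, u0, u1) \<Rightarrow> (e1, e0 + vc, - u1, - u0))"

definition shiftm1 :: "mf1 \<Rightarrow> mf1" where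
  "shiftm1 X = (case X of (e0, e1, u0, u1) \<Rightarrow> (e1 - vc, e0, - u1, - u0))"

definition shift :: "int \<Rightarrow> mf1 \<Rightarrow> mf1" where
  "shift n X = (if 0 \<le> n then (shift1 ^^ nat n) X else (shiftm1 ^^ nat (- n)) X)"

definition mf_morphism :: "nat \<Rightarrow> nat \<Rightarrow> mf1 \<Rightarrow> mf1 \<Rightarrow> poly2 \<times> poly2 \<Rightarrow> bool" where
  "mf_morphism p q X Z \<phi> = (case X of (e0, e1, u0, u1) \<Rightarrow> case Z of (f0, f1, v0, v1) \<Rightarrow>
     case \<phi> of (\<phi>0, \<phi>1) \<Rightarrow>
       homog p q (f0 - e0) \<phi>0 \<and> homog p q (f1 - e1) \<phi>1 \<and>
       v0 * \<phi>0 = \<phi>1 * u0 \<and> v1 * \<phi>1 = \<phi>0 * u1)"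

definition mf_nullhomotopic :: "nat \<Rightarrow> nat \<Rightarrow> mf1 \<Rightarrow> mf1 \<Rightarrow> poly2 \<times> poly2 \<Rightarrow> bool" where
  "mf_nullhomotopic p q X Z \<phi> = (case X of (e0, e1, u0, u1) \<Rightarrow> case Z of (f0, f1, v0, v1) \<Rightarrow>
     case \<phi> of (\<phi>0, \<phi>1) \<Rightarrow>
       (\<exists>h0 h1. homog p q (f1 - vc - e0) h0 \<and> homog p q (f0 - e1) h1 \<and>
          \<phi>0 = h1 * u0 + v1 * h0 \<and> \<phi>1 = v0 * h1 + h0 * u1))"

definition hmf_hom_zero :: "nat \<Rightarrow> nat \<Rightarrow> mf1 \<Rightarrow> mf1 \<Rightarrow> bool" where
  "hmf_hom_zero p q X Z \<longleftrightarrow>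
     (\<forall>\<phi>. mf_morphism p q X Z \<phi> \<longrightarrow> mf_nullhomotopic p q X Z \<phi>)"

definition hmf_homall_zero :: "nat \<Rightarrow> nat \<Rightarrow> mf1 \<Rightarrow> mf1 \<Rightarrow> bool" where
  "hmf_homall_zero p q X Z \<longleftrightarrow> (\<forall>n::int. hmf_hom_zero p q X (shift n Z))"

text \<open>For f homogeneous of degree df with f * g = W, the stabilisation of the
  graded R-module (R/(f))(l) is the matrix factorisation with
  X^0 = S(l - c), X^1 = S(l - df), u0 = g, u1 = f, so that
  coker(u1 : X^1 \<rightarrow> X^0(c)) = S(l)/f S(l - df) = (S/(f))(l) = (R/(f))(l).\<close>
definition stab_cyclic :: "Lrep \<Rightarrow> poly2 \<Rightarrow> poly2 \<Rightarrow> Lrep \<Rightarrow> mf1" where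
  "stab_cyclic df f g l = (l - vc, l - df, g, f)"

definition Kx :: "nat \<Rightarrow> nat \<Rightarrow> Lrep \<Rightarrow> mf1" where
  "Kx p q l = stab_cyclic vx varX (varX ^ (p - 1) * varY + varY ^ q) l"

definition Ky :: "nat \<Rightarrow> nat \<Rightarrow> Lrep \<Rightarrow> mf1" where
  "Ky p q l = stab_cyclic vy varY (varX ^ p + varX * varY ^ (q - 1)) l"

definition Kxi :: "nat \<Rightarrow> nat \<Rightarrow> nat \<Rightarrow> mf1" where
  "Kxi p q i = Kx p q ((int i + 1 - int p) * 1, 0, 0)"

definition Kyj :: "nat \<Rightarrow> nat \<Rightarrow> nat \<Rightarrow> mf1" where
  "Kyj p q j = Ky p q (0, int j + 1 - int q, 0)"

end

theory Submission
  imports Defs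
begin

text \<open>
  All objects are rank-one matrix factorisations, so a morphism is a pair of homogeneous
  polynomials and the question reduces to divisibility in \<open>\<complex>[x,y]\<close>.  Since \<open>[2] = (c)\<close>,
  every shift of a factorisation is a \<open>c\<close>-twist of it or of its first shift.
  Against a twist, a morphism \<open>K\<^sub>x \<rightarrow> K\<^sub>y(kc)\<close> satisfies \<open>y \<phi>\<^sub>1 = \<phi>\<^sub>0 x\<close>, so \<open>y\<close> divides
  \<open>\<phi>\<^sub>0\<close> and \<open>\<phi>\<^sub>0 / y\<close> is a homotopy.  Against a first shift, write \<open>W = x y s\<close>; then
  \<open>\<phi>\<^sub>0 = - s \<phi>\<^sub>1\<close>, and the degree of \<open>\<phi>\<^sub>1\<close> is nonzero in \<open>L\<close> because
  \<open>1 \<le> i \<le> p - 1\<close> and \<open>1 \<le> j \<le> q - 1\<close>.  Hence \<open>\<phi>\<^sub>1\<close> has no constant term,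
  \<open>\<phi>\<^sub>1 = x A + y B\<close>, and \<open>(A, - B)\<close> is a homotopy.
\<close>

lemma lookup_map_key:
  assumes "inj f"
  shows "Poly_Mapping.lookup (Poly_Mapping.map_key f p) k = Poly_Mapping.lookup p (f k)"
proof -
  note [transfer_rule] = assms
  show ?thesis by transfer simp
qed

lemma lookup_single_one_mult:
  fixes f :: "'a::cancel_comm_monoid_add \<Rightarrow>\<^sub>0 'b::comm_semiring_1"
  shows "Poly_Mapping.lookup (Poly_Mapping.single m 1 * f) k =
    Sum_any (\<lambda>l. Poly_Mapping.lookup f l when k = m + l)"
  by (simp add: lookup_mult lookup_single when_mult)

lemma lookup_single_one_mult_plus [simp]:
  fixes f :: "'a::cancel_comm_monoid_add \<Rightarrow>\<^sub>0 'b::comm_semiring_1"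
  shows "Poly_Mapping.lookup (Poly_Mapping.single m 1 * f) (m + k) = Poly_Mapping.lookup f k"
  by (simp add: lookup_single_one_mult when_def)

lemma lookup_single_one_mult_outside:
  fixes f :: "'a::cancel_comm_monoid_add \<Rightarrow>\<^sub>0 'b::comm_semiring_1"
  assumes "\<And>l. k \<noteq> m + l"
  shows "Poly_Mapping.lookup (Poly_Mapping.single m 1 * f) k = 0"
  using assms by (simp add: lookup_single_one_mult when_def)

lemma single_one_mult_left_cancel:
  fixes f g :: "'a::cancel_comm_monoid_add \<Rightarrow>\<^sub>0 'b::comm_semiring_1"
  assumes "Poly_Mapping.single m 1 * f = Poly_Mapping.single m 1 * g"
  shows "f = g"
proof (rule poly_mapping_eqI)
  fix k
  show "Poly_Mapping.lookup f k = Poly_Mapping.lookup g k"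
    using arg_cong[OF assms, of "\<lambda>h. Poly_Mapping.lookup h (m + k)"] by simp
qed

lemma single_one_mult_map_key_plus:
  fixes f :: "'a::cancel_comm_monoid_add \<Rightarrow>\<^sub>0 'b::comm_semiring_1"
  assumes "\<And>k. k \<in> Poly_Mapping.keys f \<Longrightarrow> \<exists>l. k = m + l"
  shows "Poly_Mapping.single m 1 * Poly_Mapping.map_key ((+) m) f = f"
proof (rule poly_mapping_eqI)
  fix k
  show "Poly_Mapping.lookup (Poly_Mapping.single m 1 * Poly_Mapping.map_key ((+) m) f) k =
    Poly_Mapping.lookup f k"
  proof (cases "\<exists>l. k = m + l")
    case True
    then show ?thesis by (auto simp: lookup_map_key inj_on_def)
  next
    case False
    then show ?thesis using assms
      by (auto simp: lookup_single_one_mult_outside in_keys_iff)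
  qed
qed

lemma exists_plus_unit_fst_iff: "(\<exists>l. k = (1, 0) + l) \<longleftrightarrow> 1 \<le> fst (k :: nat \<times> nat)"
proof
  assume "1 \<le> fst k"
  then have "k = (1, 0) + (fst k - 1, snd k)" by (simp add: prod_eq_iff)
  then show "\<exists>l. k = (1, 0) + l" ..
qed auto

lemma exists_plus_unit_snd_iff: "(\<exists>l. k = (0, 1) + l) \<longleftrightarrow> 1 \<le> snd (k :: nat \<times> nat)"
proof
  assume "1 \<le> snd k"
  then have "k = (0, 1) + (fst k, snd k - 1)" by (simp add: prod_eq_iff)
  then show "\<exists>l. k = (0, 1) + l" ..
qed auto

lemma unit_vectors_plus_cancel:
  fixes m n k l :: "nat \<times> nat"
  assumes "{m, n} = {(1, 0), (0, 1)}" and "m + k = n + l"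
  shows "\<exists>l'. k = n + l'"
proof -
  from assms(1) consider "m = (1, 0)" "n = (0, 1)" | "m = (0, 1)" "n = (1, 0)"
    by (auto simp: doubleton_eq_iff)
  then show ?thesis
  proof cases
    case 1
    then have "1 \<le> snd k" using arg_cong[OF assms(2), of snd] by simp
    then show ?thesis unfolding 1 by (rule exists_plus_unit_snd_iff[THEN iffD2])
  next
    case 2
    then have "1 \<le> fst k" using arg_cong[OF assms(2), of fst] by simp
    then show ?thesis unfolding 2 by (rule exists_plus_unit_fst_iff[THEN iffD2])
  qed
qed

lemma unit_vectors_cover:
  fixes m n k :: "nat \<times> nat"
  assumes "{m, n} = {(1, 0), (0, 1)}" and "k \<noteq> 0"
  shows "(\<exists>l. k = m + l) \<or> (\<exists>l. k = n + l)"
proof -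
  have "1 \<le> fst k \<or> 1 \<le> snd k" using assms(2) by (cases k) (auto simp: zero_prod_def)
  then have "(\<exists>l. k = (1, 0) + l) \<or> (\<exists>l. k = (0, 1) + l)"
    by (simp only: exists_plus_unit_fst_iff exists_plus_unit_snd_iff)
  then show ?thesis using assms(1) by (auto simp only: doubleton_eq_iff)
qed

definition monomial_degree :: "nat \<times> nat \<Rightarrow> Lrep" where
  "monomial_degree k = (int (fst k), int (snd k), 0)"

lemma monomial_degree_plus: "monomial_degree (k + l) = monomial_degree k + monomial_degree l"
  by (simp add: monomial_degree_def)

lemma homog_iff:
  "homog p q d f \<longleftrightarrow> (\<forall>k \<in> Poly_Mapping.keys f. Leq p q (monomial_degree k) d)"
  by (auto simp: homog_def monomial_degree_def)

lemma Leq_diff_eq: "Leq p q u d \<Longrightarrow> u - d = u' - d' \<Longrightarrow> Leq p q u' d'"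
  unfolding Leq_def by simp

lemma homog_keys_subset:
  "homog p q d f \<Longrightarrow> Poly_Mapping.keys g \<subseteq> Poly_Mapping.keys f \<Longrightarrow> homog p q d g"
  unfolding homog_def by blast

lemma homog_uminus: "homog p q d f \<Longrightarrow> homog p q d (- f)"
  by (erule homog_keys_subset) (simp add: in_keys_iff subset_iff)

lemma homog_zero: "homog p q d 0"
  by (simp add: homog_def)

lemma homog_lookup_zero:
  assumes "homog p q d f" and "\<not> Leq p q 0 d"
  shows "Poly_Mapping.lookup f 0 = 0"
proof -
  have "monomial_degree 0 = 0" by (simp add: monomial_degree_def zero_prod_def)
  then show ?thesis using assms by (metis homog_iff in_keys_iff)
qed

lemma homog_map_key_plus:
  assumes "homog p q d f"
  shows "homog p q (d - monomial_degree m) (Poly_Mapping.map_key ((+) m) f)"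
  unfolding homog_iff
proof
  fix k assume "k \<in> Poly_Mapping.keys (Poly_Mapping.map_key ((+) m) f)"
  then have "m + k \<in> Poly_Mapping.keys f" by (simp add: in_keys_iff lookup_map_key inj_on_def)
  then have "Leq p q (monomial_degree (m + k)) d" using assms by (simp add: homog_iff)
  then show "Leq p q (monomial_degree k) (d - monomial_degree m)"
    by (rule Leq_diff_eq) (simp add: monomial_degree_plus)
qed

lemma homog_factor_single:
  assumes "homog p q d f" and "\<And>k. k \<in> Poly_Mapping.keys f \<Longrightarrow> \<exists>l. k = m + l"
  obtains g where "homog p q (d - monomial_degree m) g" and "f = Poly_Mapping.single m 1 * g"
  using homog_map_key_plus[OF assms(1)] single_one_mult_map_key_plus[OF assms(2)] by metis

lemma unit_vectors_coprime:
  fixes a b :: poly2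
  assumes "{m, n} = {(1, 0), (0, 1)}"
    and "Poly_Mapping.single m 1 * a = Poly_Mapping.single n 1 * b" and "k \<in> Poly_Mapping.keys a"
  shows "\<exists>l. k = n + l"
proof -
  have "Poly_Mapping.lookup (Poly_Mapping.single n 1 * b) (m + k) \<noteq> 0"
    using assms(2,3) by (metis in_keys_iff lookup_single_one_mult_plus)
  then obtain l where "m + k = n + l" using lookup_single_one_mult_outside by metis
  then show ?thesis using assms(1) unit_vectors_plus_cancel by blast
qed

lemma homog_split_unit_vectors:
  assumes vars: "{m, n} = {(1, 0), (0, 1)}" and f: "homog p q d f" "Poly_Mapping.lookup f 0 = 0"
  obtains A B where "homog p q (d - monomial_degree m) A" and "homog p q (d - monomial_degree n) B"
    and "f = Poly_Mapping.single m 1 * A + Poly_Mapping.single n 1 * B"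
proof -
  define A where "A = Poly_Mapping.map_key ((+) m) f"
  define r where "r = f - Poly_Mapping.single m 1 * A"
  have lookup_r:
    "Poly_Mapping.lookup r k = (if \<exists>l. k = m + l then 0 else Poly_Mapping.lookup f k)" for k
  proof (cases "\<exists>l. k = m + l")
    case False
    then have "Poly_Mapping.lookup (Poly_Mapping.single m 1 * A) k = 0"
      by (intro lookup_single_one_mult_outside) blast
    with False show ?thesis by (simp add: r_def lookup_minus)
  qed (auto simp: r_def A_def lookup_minus lookup_map_key inj_on_def)
  have "homog p q d r"
    using f(1) by (rule homog_keys_subset) (auto simp: in_keys_iff lookup_r split: if_splits)
  moreover have "\<exists>l. k = n + l" if "k \<in> Poly_Mapping.keys r" for k
    using that unit_vectors_cover[OF vars, of k] f(2)
    by (auto simp: in_keys_iff lookup_r split: if_splits)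
  ultimately obtain B where "homog p q (d - monomial_degree n) B" "r = Poly_Mapping.single n 1 * B"
    by (rule homog_factor_single)
  moreover have "homog p q (d - monomial_degree m) A"
    unfolding A_def using f(1) by (rule homog_map_key_plus)
  moreover have "f = Poly_Mapping.single m 1 * A + r" by (simp add: r_def)
  ultimately show ?thesis using that by blast
qed

lemma hmf_hom_zero_unit_vectors_even:
  assumes vars: "{m, n} = {(1, 0), (0, 1)}" and deg: "f1 = f0 + vc - monomial_degree n"
  shows "hmf_hom_zero p q (e0, e1, u0, Poly_Mapping.single m 1) (f0, f1, v0, Poly_Mapping.single n 1)"
  unfolding hmf_hom_zero_def
proof (intro allI impI)
  fix \<phi>
  assume "mf_morphism p q (e0, e1, u0, Poly_Mapping.single m 1)
    (f0, f1, v0, Poly_Mapping.single n 1) \<phi>"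
  moreover obtain \<phi>0 \<phi>1 where \<phi>: "\<phi> = (\<phi>0, \<phi>1)" by fastforce
  ultimately have \<phi>0_homog: "homog p q (f0 - e0) \<phi>0"
    and square: "Poly_Mapping.single n 1 * \<phi>1 = Poly_Mapping.single m 1 * \<phi>0"
    by (simp_all add: mf_morphism_def mult.commute)
  have "\<exists>l. k = n + l" if "k \<in> Poly_Mapping.keys \<phi>0" for k
    using unit_vectors_coprime[OF vars square[symmetric] that] .
  with \<phi>0_homog obtain \<psi> where \<psi>: "homog p q (f0 - e0 - monomial_degree n) \<psi>"
    and \<phi>0: "\<phi>0 = Poly_Mapping.single n 1 * \<psi>"
    by (rule homog_factor_single)
  have "Poly_Mapping.single n 1 * \<phi>1 = Poly_Mapping.single n 1 * (\<psi> * Poly_Mapping.single m 1)"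
    using square unfolding \<phi>0 by (metis mult.commute mult.left_commute)
  then have \<phi>1: "\<phi>1 = \<psi> * Poly_Mapping.single m 1" by (rule single_one_mult_left_cancel)
  have deg_h0: "f1 - vc - e0 = f0 - e0 - monomial_degree n" using deg by (simp add: algebra_simps)
  show "mf_nullhomotopic p q (e0, e1, u0, Poly_Mapping.single m 1)
    (f0, f1, v0, Poly_Mapping.single n 1) \<phi>"
    unfolding \<phi> mf_nullhomotopic_def prod.case
    by (rule exI[of _ \<psi>], rule exI[of _ 0]) (simp add: \<psi> \<phi>0 \<phi>1 deg_h0 homog_zero)
qed

lemma hmf_hom_zero_unit_vectors_odd:
  assumes vars: "{m, n} = {(1, 0), (0, 1)}"
    and e1: "e1 = e0 + vc - monomial_degree m" and f1: "f1 = f0 + monomial_degree n"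
    and nonzero: "\<not> Leq p q 0 (f1 - e1)"
  shows "hmf_hom_zero p q (e0, e1, Poly_Mapping.single n 1 * s, Poly_Mapping.single m 1)
    (f0, f1, - Poly_Mapping.single n 1, - (Poly_Mapping.single m 1 * s))"
  unfolding hmf_hom_zero_def
proof (intro allI impI)
  fix \<phi>
  assume "mf_morphism p q (e0, e1, Poly_Mapping.single n 1 * s, Poly_Mapping.single m 1)
    (f0, f1, - Poly_Mapping.single n 1, - (Poly_Mapping.single m 1 * s)) \<phi>"
  moreover obtain \<phi>0 \<phi>1 where \<phi>: "\<phi> = (\<phi>0, \<phi>1)" by fastforce
  ultimately have \<phi>1_homog: "homog p q (f1 - e1) \<phi>1"
    and square: "- (Poly_Mapping.single m 1 * s) * \<phi>1 = \<phi>0 * Poly_Mapping.single m 1"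
    by (simp_all add: mf_morphism_def)
  have "Poly_Mapping.single m 1 * \<phi>0 = \<phi>0 * Poly_Mapping.single m 1" by (rule mult.commute)
  also have "\<dots> = Poly_Mapping.single m 1 * - (s * \<phi>1)"
    unfolding square[symmetric] by (simp add: mult.assoc)
  finally have \<phi>0: "\<phi>0 = - (s * \<phi>1)" by (rule single_one_mult_left_cancel)
  obtain A B where A: "homog p q (f1 - e1 - monomial_degree m) A"
    and B: "homog p q (f1 - e1 - monomial_degree n) B"
    and \<phi>1: "\<phi>1 = Poly_Mapping.single m 1 * A + Poly_Mapping.single n 1 * B"
    using homog_split_unit_vectors[OF vars \<phi>1_homog homog_lookup_zero[OF \<phi>1_homog nonzero]] .
  have deg_h0: "f1 - vc - e0 = f1 - e1 - monomial_degree m" using e1 by (simp add: algebra_simps)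
  have deg_h1: "f0 - e1 = f1 - e1 - monomial_degree n" using f1 by (simp add: algebra_simps)
  have "\<phi>0 = - B * (Poly_Mapping.single n 1 * s) + - (Poly_Mapping.single m 1 * s) * A"
    "\<phi>1 = - Poly_Mapping.single n 1 * - B + A * Poly_Mapping.single m 1"
    unfolding \<phi>0 \<phi>1 by (simp_all add: algebra_simps)
  then show "mf_nullhomotopic p q (e0, e1, Poly_Mapping.single n 1 * s, Poly_Mapping.single m 1)
    (f0, f1, - Poly_Mapping.single n 1, - (Poly_Mapping.single m 1 * s)) \<phi>"
    unfolding \<phi> mf_nullhomotopic_def prod.case
    by - (rule exI[of _ A], rule exI[of _ "- B"], simp add: A B homog_uminus deg_h0 deg_h1)
qed

definition twist_c :: "int \<Rightarrow> mf1 \<Rightarrow> mf1" where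
  "twist_c k X = (case X of (e0, e1, u0, u1) \<Rightarrow> (e0 + (0, 0, k), e1 + (0, 0, k), u0, u1))"

lemma twist_c_0 [simp]: "twist_c 0 X = X"
  by (cases X) (simp add: twist_c_def zero_prod_def[symmetric])

lemma shift1_shift1_twist_c: "shift1 (shift1 (twist_c k X)) = twist_c (k + 1) X"
  by (cases X) (simp add: shift1_def twist_c_def vc_def)

lemma shiftm1_twist_c: "shiftm1 (twist_c k X) = shift1 (twist_c (k - 1) X)"
  by (cases X) (simp add: shift1_def shiftm1_def twist_c_def vc_def)

lemma shiftm1_shift1: "shiftm1 (shift1 X) = X"
  by (cases X) (simp add: shift1_def shiftm1_def)

lemma shift_cases:
  obtains k where "shift n X = twist_c k X" | k where "shift n X = shift1 (twist_c k X)"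
proof -
  define twists where "twists = {Z. \<exists>k. Z = twist_c k X \<or> Z = shift1 (twist_c k X)}"
  have "X = twist_c 0 X" by simp
  then have "X \<in> twists" unfolding twists_def by blast
  moreover have "shift1 Z \<in> twists" if "Z \<in> twists" for Z
    using that unfolding twists_def by (auto simp: shift1_shift1_twist_c)
  moreover have "shiftm1 Z \<in> twists" if "Z \<in> twists" for Z
    using that unfolding twists_def by (auto simp: shiftm1_twist_c shiftm1_shift1)
  ultimately have "(shift1 ^^ a) X \<in> twists" "(shiftm1 ^^ a) X \<in> twists" for a
    by (induction a) simp_all
  then have "shift n X \<in> twists" by (simp add: shift_def)
  then show ?thesis using that unfolding twists_def by blast
qed

lemma hmf_homall_zero_if_twists:
  assumes "\<And>k. hmf_hom_zero p q X (twist_c k Z)"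
    and "\<And>k. hmf_hom_zero p q X (shift1 (twist_c k Z))"
  shows "hmf_homall_zero p q X Z"
  unfolding hmf_homall_zero_def
proof
  fix n
  show "hmf_hom_zero p q X (shift n Z)"
    by (cases n Z rule: shift_cases) (simp_all add: assms)
qed

lemma Leq_swap: "Leq p q (a, b, c) (a', b', c') \<longleftrightarrow> Leq q p (b, a, c) (b', a', c')"
proof -
  have "(a - a', b - b', c - c') = (m * int p + n, m + n * int q, - m - n) \<longleftrightarrow>
    (b - b', a - a', c - c') = (n * int q + m, n + m * int p, - n - m)" for m n :: int
    by (auto simp: algebra_simps)
  then show ?thesis unfolding Leq_def by auto
qed

lemma not_Leq_zero_mixed_degree:
  fixes p q i j :: nat
  assumes "2 \<le> p" "2 \<le> q" "1 \<le> i" "i < p" "1 \<le> j" "j < q"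
  shows "\<not> Leq p q 0 (int p - int i, int j + 1 - int q, k)"
proof
  assume "Leq p q 0 (int p - int i, int j + 1 - int q, k)"
  then obtain m n :: int where "int i - int p = m * int p + n" "int q - 1 - int j = m + n * int q"
    unfolding Leq_def by (auto simp: algebra_simps zero_prod_def)
  then have m: "m * (int p * int q - 1) = int i * int q + int j + 1 - int p * int q - int q"
    by algebra
  txt \<open>The bounds on \<open>i\<close> and \<open>j\<close> put \<open>m (p q - 1)\<close> strictly between \<open>-(p q - 1)\<close>
    and \<open>0\<close>.\<close>
  have "int q \<le> int i * int q" using assms by simp
  then have lower: "1 - int p * int q < m * (int p * int q - 1)"
    unfolding m using assms by linarith
  have "int i * int q \<le> (int p - 1) * int q" using assms by (intro mult_right_mono) auto
  then have upper: "m * (int p * int q - 1) < 0"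
    unfolding m using assms by (simp add: algebra_simps)
  have N: "0 < int p * int q - 1" using mult_mono[of 2 "int p" 2 "int q"] assms by simp
  from lower have "- 1 * (int p * int q - 1) < m * (int p * int q - 1)" by simp
  with N have "- 1 < m" by (simp only: mult_less_cancel_right_pos)
  moreover from upper N have "m < 0" by (simp add: mult_less_0_iff)
  ultimately show False by simp
qed

definition W_div_xy :: "nat \<Rightarrow> nat \<Rightarrow> poly2" where
  "W_div_xy p q = varX ^ (p - 1) + varY ^ (q - 1)"

lemma Kxi_eq:
  assumes "1 \<le> q"
  shows "Kxi p q i = ((int i + 1 - int p, 0, -1), (int i - int p, 0, 0),
    Poly_Mapping.single (0, 1) 1 * W_div_xy p q, Poly_Mapping.single (1, 0) 1)"
proof -
  have "varX ^ (p - 1) * varY + varY ^ q = varY * W_div_xy p q"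
    using assms by (cases q) (simp_all add: W_div_xy_def algebra_simps)
  then show ?thesis
    by (simp add: Kxi_def Kx_def stab_cyclic_def vc_def vx_def varX_def varY_def zero_prod_def)
qed

lemma Kyj_eq:
  assumes "1 \<le> p"
  shows "Kyj p q j = ((0, int j + 1 - int q, -1), (0, int j - int q, 0),
    Poly_Mapping.single (1, 0) 1 * W_div_xy p q, Poly_Mapping.single (0, 1) 1)"
proof -
  have "varX ^ p + varX * varY ^ (q - 1) = varX * W_div_xy p q"
    using assms by (cases p) (simp_all add: W_div_xy_def algebra_simps)
  then show ?thesis
    by (simp add: Kyj_def Ky_def stab_cyclic_def vc_def vy_def varX_def varY_def zero_prod_def)
qed

lemma Kxi_Kyj_orthogonal:
  fixes p q i j :: nat
  assumes "2 \<le> p" "2 \<le> q" "1 \<le> i" "i < p" "1 \<le> j" "j < q"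
  shows "hmf_homall_zero p q (Kxi p q i) (Kyj p q j)"
proof (rule hmf_homall_zero_if_twists)
  fix k
  have vars: "{(1, 0), (0, 1)} = {(1 :: nat, 0 :: nat), (0, 1)}" ..
  have "1 \<le> p" "1 \<le> q" using assms by simp_all
  note K = Kxi_eq[OF \<open>1 \<le> q\<close>] Kyj_eq[OF \<open>1 \<le> p\<close>]
  show "hmf_hom_zero p q (Kxi p q i) (twist_c k (Kyj p q j))"
    unfolding K twist_c_def prod.case
    by (rule hmf_hom_zero_unit_vectors_even[OF vars]) (simp add: vc_def monomial_degree_def)
  show "hmf_hom_zero p q (Kxi p q i) (shift1 (twist_c k (Kyj p q j)))"
    unfolding K twist_c_def shift1_def prod.case
    by (rule hmf_hom_zero_unit_vectors_odd[OF vars]) (use not_Leq_zero_mixed_degree[OF assms, of k]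
      in \<open>simp_all add: vc_def monomial_degree_def zero_prod_def\<close>)
qed

lemma Kyj_Kxi_orthogonal:
  fixes p q i j :: nat
  assumes "2 \<le> p" "2 \<le> q" "1 \<le> i" "i < p" "1 \<le> j" "j < q"
  shows "hmf_homall_zero p q (Kyj p q j) (Kxi p q i)"
proof (rule hmf_homall_zero_if_twists)
  fix k
  have vars: "{(0, 1), (1, 0)} = {(1 :: nat, 0 :: nat), (0, 1)}" by auto
  have "1 \<le> p" "1 \<le> q" using assms by simp_all
  note K = Kxi_eq[OF \<open>1 \<le> q\<close>] Kyj_eq[OF \<open>1 \<le> p\<close>]
  have nonzero: "\<not> Leq p q 0 (int i + 1 - int p, int q - int j, k)"
    using not_Leq_zero_mixed_degree[of q p j i k] assms by (simp add: Leq_swap zero_prod_def)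
  show "hmf_hom_zero p q (Kyj p q j) (twist_c k (Kxi p q i))"
    unfolding K twist_c_def prod.case
    by (rule hmf_hom_zero_unit_vectors_even[OF vars]) (simp add: vc_def monomial_degree_def)
  show "hmf_hom_zero p q (Kyj p q j) (shift1 (twist_c k (Kxi p q i)))"
    unfolding K twist_c_def shift1_def prod.case
    by (rule hmf_hom_zero_unit_vectors_odd[OF vars])
      (use nonzero in \<open>simp_all add: vc_def monomial_degree_def zero_prod_def\<close>)
qed

theorem lemma2p7:
  fixes p q i j :: nat
  assumes "2 \<le> p" and "2 \<le> q"
    and "1 \<le> i" and "i \<le> p - 1"
    and "1 \<le> j" and "j \<le> q - 1"
  shows "hmf_homall_zero p q (Kxi p q i) (Kyj p q j) \<and>
         hmf_homall_zero p q (Kyj p q j) (Kxi p q i)"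
proof -
  have "i < p" "j < q" using assms by simp_all
  with assms show ?thesis by (simp add: Kxi_Kyj_orthogonal Kyj_Kxi_orthogonal)
qed

end
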